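(* Let $G=(V,E)$ be a finite graph without loops and $e=uv\in E$. Let $G-e$ be the graph obtained from $G$ by removing the edge $e$, and let $G/e$ be the contraction of $e$: $u$ and $v$ are replaced by a single new vertex $w$ whose incident edges are exactly the edges other than $e$ that were incident with $u$ or $v$. Then $$\frac{\gamma_{coe}(G-e)+\gamma_{coe}(G/e)}{2}-1\leq \gamma_{coe}(G)\leq \frac{\gamma_{coe}(G-e)+\gamma_{coe}(G/e)}{2}+2.$$
   Context: Graphs have no loops. For a graph $G=(V,E)$ and $x\in V$, $\deg(x)$ is the number of edges incident to $x$. A set $D\subseteq V$ is a dominating set if every vertex of $V\setminus D$ is adjacent to at least one vertex of $D$. A dominating set $D$ is a co-even dominating set if $\deg(x)$ is even for every $x\in V\setminus D$ (degrees taken in the graph under consideration). The co-even domination number $\gamma_{coe}(G)$ is the minimum cardinality of a co-even dominating set of $G$. *)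

theory Defs
  imports Complex_Main
begin

text \<open>Finite loopless multigraphs: vertex set V, edge set E, and an endpoint map
  ends giving each edge a 2-element set of endpoints in V.\<close>

definition mgraph :: "'v set \<Rightarrow> 'e set \<Rightarrow> ('e \<Rightarrow> 'v set) \<Rightarrow> bool" where
  "mgraph V E ends \<longleftrightarrow> finite V \<and> finite E \<and>
     (\<forall>f\<in>E. ends f \<subseteq> V \<and> card (ends f) = 2)"

definition deg :: "'e set \<Rightarrow> ('e \<Rightarrow> 'v set) \<Rightarrow> 'v \<Rightarrow> nat" where
  "deg E ends x = card {f\<in>E. x \<in> ends f}"

definition adj :: "'e set \<Rightarrow> ('e \<Rightarrow> 'v set) \<Rightarrow> 'v \<Rightarrow> 'v \<Rightarrow> bool" where
  "adj E ends x y \<longleftrightarrow> (\<exists>f\<in>E. ends f = {x, y})"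

definition dominating :: "'v set \<Rightarrow> 'e set \<Rightarrow> ('e \<Rightarrow> 'v set) \<Rightarrow> 'v set \<Rightarrow> bool" where
  "dominating V E ends D \<longleftrightarrow> D \<subseteq> V \<and> (\<forall>x\<in>V - D. \<exists>y\<in>D. adj E ends x y)"

definition coeven_dominating :: "'v set \<Rightarrow> 'e set \<Rightarrow> ('e \<Rightarrow> 'v set) \<Rightarrow> 'v set \<Rightarrow> bool" where
  "coeven_dominating V E ends D \<longleftrightarrow>
     dominating V E ends D \<and> (\<forall>x\<in>V - D. even (deg E ends x))"

definition gamma_coe :: "'v set \<Rightarrow> 'e set \<Rightarrow> ('e \<Rightarrow> 'v set) \<Rightarrow> nat" where
  "gamma_coe V E ends = Min (card ` {D. coeven_dominating V E ends D})"

definition del_edge :: "'e set \<Rightarrow> 'e \<Rightarrow> 'e set" where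
  "del_edge E e = E - {e}"

text \<open>Contraction of edge e with ends {u,v}: the merged vertex w is represented by u
  (vertex v is removed and every endpoint v is renamed to u); this is isomorphic to
  the contraction with a fresh vertex w.\<close>
definition contr_vertices :: "'v set \<Rightarrow> 'v \<Rightarrow> 'v set" where
  "contr_vertices V v = V - {v}"

definition contr_ends :: "('e \<Rightarrow> 'v set) \<Rightarrow> 'v \<Rightarrow> 'v \<Rightarrow> 'e \<Rightarrow> 'v set" where
  "contr_ends ends u v f = (\<lambda>x. if x = v then u else x) ` ends f"

end

theory Submission
  imports Defs
begin

(* Adding both ends of e to a co-even dominating set of G or of G - e yields one of the
   other graph, since vertices off e keep their neighbours and degrees.  Identifying u and v
   in a co-even dominating set of G yields one of G/e: the merged vertex has degree
   deg u + deg v - 2 (this uses that e has no parallel edge), which is even when neither u nor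
   v is in the set.  Conversely a co-even dominating set of G/e together with u and v is one
   of G.  Averaging gamma(G - e) <= gamma(G) + 2, gamma(G/e) <= gamma(G),
   gamma(G) <= gamma(G - e) + 2 and gamma(G) <= gamma(G/e) + 2 gives both bounds. *)

lemma coeven_dominating_subset: "coeven_dominating V E ends D \<Longrightarrow> D \<subseteq> V"
  by (simp add: coeven_dominating_def dominating_def)

lemma coeven_dominating_mono:
  assumes "coeven_dominating V E ends D" and "D \<subseteq> D'" and "D' \<subseteq> V"
  shows "coeven_dominating V E ends D'"
  using assms by (fastforce simp: coeven_dominating_def dominating_def)

lemma finite_coeven_dominating_sets:
  "finite V \<Longrightarrow> finite {D. coeven_dominating V E ends D}"
  by (rule finite_subset[of _ "Pow V"]) (auto dest: coeven_dominating_subset)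

lemma gamma_coe_le:
  assumes "finite V" and "coeven_dominating V E ends D"
  shows "gamma_coe V E ends \<le> card D"
  unfolding gamma_coe_def
  using finite_coeven_dominating_sets[OF assms(1)] assms(2) by (intro Min_le) auto

lemma gamma_coe_attained:
  assumes "finite V"
  obtains D where "coeven_dominating V E ends D" and "card D = gamma_coe V E ends"
proof -
  have "coeven_dominating V E ends V"
    by (simp add: coeven_dominating_def dominating_def)
  then have "gamma_coe V E ends \<in> card ` {D. coeven_dominating V E ends D}"
    unfolding gamma_coe_def using finite_coeven_dominating_sets[OF assms]
    by (intro Min_in) auto
  then show ?thesis using that by force
qed

lemma gamma_coe_le_transfer:
  assumes "finite V" and "finite V'"
    and "\<And>D. coeven_dominating V' E' ends' D \<Longrightarrow>
           \<exists>D'. coeven_dominating V E ends D' \<and> card D' \<le> card D + k"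
  shows "gamma_coe V E ends \<le> gamma_coe V' E' ends' + k"
proof -
  obtain D where D: "coeven_dominating V' E' ends' D" "card D = gamma_coe V' E' ends'"
    using gamma_coe_attained[OF assms(2)] .
  then obtain D' where "coeven_dominating V E ends D'" "card D' \<le> card D + k"
    using assms(3) by blast
  then show ?thesis
    using gamma_coe_le[OF assms(1)] D(2) by fastforce
qed

lemma deg_del_edge: "x \<notin> ends e \<Longrightarrow> deg (E - {e}) ends x = deg E ends x"
  unfolding deg_def by (rule arg_cong[where f = card]) auto

lemma coeven_dominating_del_edge_iff:
  assumes "ends e \<subseteq> D"
  shows "coeven_dominating V (E - {e}) ends D \<longleftrightarrow> coeven_dominating V E ends D"
proof -
  have "adj (E - {e}) ends x y \<longleftrightarrow> adj E ends x y" if "x \<notin> D" for x y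
    using that assms by (auto simp: adj_def)
  moreover have "deg (E - {e}) ends x = deg E ends x" if "x \<notin> D" for x
    using that assms by (auto intro: deg_del_edge)
  ultimately show ?thesis
    by (simp add: coeven_dominating_def dominating_def)
qed

lemma coeven_dominating_Un_ends_del_edge:
  assumes "coeven_dominating V E ends D" and "ends e \<subseteq> V"
  shows "coeven_dominating V (E - {e}) ends (D \<union> ends e)"
  using assms coeven_dominating_subset[OF assms(1)]
  by (simp add: coeven_dominating_del_edge_iff coeven_dominating_mono)

lemma coeven_dominating_Un_ends_add_edge:
  assumes "coeven_dominating V (E - {e}) ends D" and "ends e \<subseteq> V"
  shows "coeven_dominating V E ends (D \<union> ends e)"
  using assms coeven_dominating_subset[OF assms(1)]
  by (metis Un_least Un_upper1 Un_upper2 coeven_dominating_del_edge_iff coeven_dominating_mono)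

definition merge_vertex :: "'v \<Rightarrow> 'v \<Rightarrow> 'v \<Rightarrow> 'v" where
  "merge_vertex u v x = (if x = v then u else x)"

lemma contr_ends_eq_image: "contr_ends ends u v f = merge_vertex u v ` ends f"
  by (simp add: contr_ends_def merge_vertex_def)

lemma mem_contr_ends_iff:
  "x \<noteq> u \<Longrightarrow> x \<noteq> v \<Longrightarrow> x \<in> contr_ends ends u v f \<longleftrightarrow> x \<in> ends f"
  by (auto simp: contr_ends_def)

lemma deg_contr_ends:
  "x \<noteq> u \<Longrightarrow> x \<noteq> v \<Longrightarrow> deg E (contr_ends ends u v) x = deg E ends x"
  by (simp add: deg_def mem_contr_ends_iff)

lemma adj_contr_ends:
  "adj E ends x y \<Longrightarrow> adj E (contr_ends ends u v) (merge_vertex u v x) (merge_vertex u v y)"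
  by (auto simp: adj_def contr_ends_eq_image)

lemma adj_contr_endsD:
  assumes "\<forall>f\<in>E. card (ends f) = 2" and "adj E (contr_ends ends u v) x y"
    and "x \<noteq> u" and "x \<noteq> v"
  obtains z where "adj E ends x z" and "merge_vertex u v z = y"
proof -
  obtain f where f: "f \<in> E" "merge_vertex u v ` ends f = {x, y}"
    using assms(2) by (auto simp: adj_def contr_ends_eq_image)
  obtain a b where ab: "ends f = {a, b}" "a \<noteq> b"
    using assms(1) f(1) by (meson card_2_iff)
  have merge_eq_x: "merge_vertex u v c = x \<longleftrightarrow> c = x" for c
    using assms(3,4) by (auto simp: merge_vertex_def)
  show ?thesis
  proof (cases "a = x")
    case True
    then have "merge_vertex u v b = y"
      using f(2) ab merge_eq_x by (auto simp: doubleton_eq_iff)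
    then show ?thesis using that f(1) ab True by (auto simp: adj_def)
  next
    case False
    then have "b = x" and "merge_vertex u v a = y"
      using f(2) ab merge_eq_x by (auto simp: doubleton_eq_iff)
    then show ?thesis using that f(1) ab by (auto simp: adj_def insert_commute)
  qed
qed

lemma deg_contr_ends_merged:
  assumes "mgraph V E ends" and "e \<in> E" and "ends e = {u, v}"
    and "\<forall>f\<in>E - {e}. ends f \<noteq> {u, v}"
  shows "deg (E - {e}) (contr_ends ends u v) u + 2 = deg E ends u + deg E ends v"
proof -
  have fin: "finite E" and two: "\<And>f. f \<in> E \<Longrightarrow> card (ends f) = 2"
    using assms(1) by (auto simp: mgraph_def)
  define A where "A = {f\<in>E. u \<in> ends f} - {e}"
  define B where "B = {f\<in>E. v \<in> ends f} - {e}"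
  have "{f\<in>E - {e}. u \<in> contr_ends ends u v f} = A \<union> B"
    by (auto simp: A_def B_def contr_ends_def)
  moreover have "A \<inter> B = {}"
  proof -
    have "ends f = {u, v}" if "f \<in> E" "u \<in> ends f" "v \<in> ends f" for f
      using two[OF that(1)] that(2,3) two[OF assms(2)] assms(3)
      by (metis card_2_iff doubleton_eq_iff insertE singletonD)
    then show ?thesis using assms(4) by (auto simp: A_def B_def)
  qed
  ultimately have "deg (E - {e}) (contr_ends ends u v) u = card A + card B"
    using fin by (simp add: deg_def A_def B_def card_Un_disjoint)
  moreover have "card ({f\<in>E. w \<in> ends f} - {e}) + 1 = deg E ends w" if "w \<in> ends e" for w
    using card_Suc_Diff1[of "{f\<in>E. w \<in> ends f}" e] fin assms(2) that
    by (simp add: deg_def)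
  then have "card A + 1 = deg E ends u" and "card B + 1 = deg E ends v"
    using assms(3) by (auto simp: A_def B_def)
  ultimately show ?thesis by simp
qed

lemma coeven_dominating_contr:
  assumes "mgraph V E ends" and "e \<in> E" and "ends e = {u, v}"
    and "\<forall>f\<in>E - {e}. ends f \<noteq> {u, v}"
    and D: "coeven_dominating V E ends D"
  shows "coeven_dominating (V - {v}) (E - {e}) (contr_ends ends u v) (merge_vertex u v ` D)"
proof -
  have "ends e \<subseteq> V" and "card (ends e) = 2"
    using assms(1,2) by (auto simp: mgraph_def)
  then have "u \<in> V" "u \<noteq> v"
    using assms(3) by auto
  have "merge_vertex u v ` D \<subseteq> V - {v}"
    using coeven_dominating_subset[OF D] \<open>u \<in> V\<close> \<open>u \<noteq> v\<close> by (auto simp: merge_vertex_def)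
  moreover have "\<exists>y\<in>merge_vertex u v ` D. adj (E - {e}) (contr_ends ends u v) x y"
    and "even (deg (E - {e}) (contr_ends ends u v) x)"
    if x: "x \<in> V - {v} - merge_vertex u v ` D" for x
  proof -
    have "x \<in> V - D" and merge_x: "merge_vertex u v x = x"
      using x by (auto simp: merge_vertex_def)
    then obtain y where "y \<in> D" and "adj E ends x y"
      using D unfolding coeven_dominating_def dominating_def by blast
    moreover have "{x, y} \<noteq> {u, v}"
      using x \<open>y \<in> D\<close> by (auto simp: doubleton_eq_iff merge_vertex_def)
    ultimately have "adj (E - {e}) ends x y"
      using assms(3) by (auto simp: adj_def)
    then show "\<exists>y\<in>merge_vertex u v ` D. adj (E - {e}) (contr_ends ends u v) x y"
      using adj_contr_ends[of "E - {e}" ends x y u v] merge_x \<open>y \<in> D\<close> by auto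
    show "even (deg (E - {e}) (contr_ends ends u v) x)"
    proof (cases "x = u")
      case True
      then have "u \<notin> D" "v \<notin> D" "v \<in> V"
        using x \<open>ends e \<subseteq> V\<close> assms(3) by (auto simp: merge_vertex_def)
      then have "even (deg E ends u + deg E ends v)"
        using D \<open>u \<in> V\<close> by (simp add: coeven_dominating_def)
      then show ?thesis
        using True deg_contr_ends_merged[OF assms(1-4)] by (metis even_add even_numeral)
    next
      case False
      then show ?thesis
        using x \<open>x \<in> V - D\<close> D assms(3)
        by (simp add: deg_contr_ends deg_del_edge coeven_dominating_def)
    qed
  qed
  ultimately show ?thesis
    by (simp add: coeven_dominating_def dominating_def)
qed

lemma coeven_dominating_uncontr:
  assumes "mgraph V E ends" and "e \<in> E" and "ends e = {u, v}"
    and D: "coeven_dominating (V - {v}) (E - {e}) (contr_ends ends u v) D"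
  shows "coeven_dominating V E ends (D \<union> {u, v})"
proof -
  have two: "\<forall>f\<in>E. card (ends f) = 2" and "{u, v} \<subseteq> V"
    using assms(1-3) by (auto simp: mgraph_def)
  have "D \<union> {u, v} \<subseteq> V"
    using coeven_dominating_subset[OF D] \<open>{u, v} \<subseteq> V\<close> by auto
  moreover have "\<exists>z\<in>D \<union> {u, v}. adj E ends x z" and "even (deg E ends x)"
    if x: "x \<in> V - (D \<union> {u, v})" for x
  proof -
    have "x \<in> V - {v} - D"
      using x by blast
    then obtain y where "y \<in> D" and "adj (E - {e}) (contr_ends ends u v) x y"
      using D unfolding coeven_dominating_def dominating_def by blast
    then obtain z where "adj (E - {e}) ends x z" and "merge_vertex u v z = y"
      using adj_contr_endsD[of "E - {e}" ends u v x y] two x by auto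
    then have "z \<in> D \<union> {u, v}" and "adj E ends x z"
      using \<open>y \<in> D\<close> by (auto simp: adj_def merge_vertex_def split: if_splits)
    then show "\<exists>z\<in>D \<union> {u, v}. adj E ends x z" by blast
    have "even (deg (E - {e}) (contr_ends ends u v) x)"
      using D \<open>x \<in> V - {v} - D\<close> unfolding coeven_dominating_def by blast
    then show "even (deg E ends x)"
      using x assms(3) by (simp add: deg_contr_ends deg_del_edge)
  qed
  ultimately show ?thesis
    by (simp add: coeven_dominating_def dominating_def)
qed

lemma card_Un_ends_le:
  assumes "mgraph V E ends" and "e \<in> E"
  shows "card (D \<union> ends e) \<le> card D + 2"
  using card_Un_le[of D "ends e"] assms by (auto simp: mgraph_def)

lemma gamma_coe_del_edge_le:
  assumes "mgraph V E ends" and "e \<in> E"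
  shows "gamma_coe V (E - {e}) ends \<le> gamma_coe V E ends + 2"
proof -
  have "finite V" and "ends e \<subseteq> V"
    using assms by (auto simp: mgraph_def)
  show ?thesis
  proof (rule gamma_coe_le_transfer[OF \<open>finite V\<close> \<open>finite V\<close>])
    fix D
    assume "coeven_dominating V E ends D"
    then have "coeven_dominating V (E - {e}) ends (D \<union> ends e)"
      using \<open>ends e \<subseteq> V\<close> by (rule coeven_dominating_Un_ends_del_edge)
    then show "\<exists>D'. coeven_dominating V (E - {e}) ends D' \<and> card D' \<le> card D + 2"
      using card_Un_ends_le[OF assms] by blast
  qed
qed

lemma gamma_coe_le_del_edge:
  assumes "mgraph V E ends" and "e \<in> E"
  shows "gamma_coe V E ends \<le> gamma_coe V (E - {e}) ends + 2"
proof -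
  have "finite V" and "ends e \<subseteq> V"
    using assms by (auto simp: mgraph_def)
  show ?thesis
  proof (rule gamma_coe_le_transfer[OF \<open>finite V\<close> \<open>finite V\<close>])
    fix D
    assume "coeven_dominating V (E - {e}) ends D"
    then have "coeven_dominating V E ends (D \<union> ends e)"
      using \<open>ends e \<subseteq> V\<close> by (rule coeven_dominating_Un_ends_add_edge)
    then show "\<exists>D'. coeven_dominating V E ends D' \<and> card D' \<le> card D + 2"
      using card_Un_ends_le[OF assms] by blast
  qed
qed

lemma gamma_coe_contr_le:
  assumes "mgraph V E ends" and "e \<in> E" and "ends e = {u, v}"
    and "\<forall>f\<in>E - {e}. ends f \<noteq> {u, v}"
  shows "gamma_coe (V - {v}) (E - {e}) (contr_ends ends u v) \<le> gamma_coe V E ends"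
proof -
  have "finite V"
    using assms(1) by (simp add: mgraph_def)
  obtain D where D: "coeven_dominating V E ends D" "card D = gamma_coe V E ends"
    using gamma_coe_attained[OF \<open>finite V\<close>] .
  have "gamma_coe (V - {v}) (E - {e}) (contr_ends ends u v) \<le> card (merge_vertex u v ` D)"
    using \<open>finite V\<close> coeven_dominating_contr[OF assms D(1)] by (simp add: gamma_coe_le)
  also have "\<dots> \<le> card D"
    using coeven_dominating_subset[OF D(1)] \<open>finite V\<close> by (simp add: card_image_le finite_subset)
  finally show ?thesis
    using D(2) by simp
qed

lemma gamma_coe_le_contr:
  assumes "mgraph V E ends" and "e \<in> E" and "ends e = {u, v}"
  shows "gamma_coe V E ends \<le> gamma_coe (V - {v}) (E - {e}) (contr_ends ends u v) + 2"
proof -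
  have "finite V"
    using assms(1) by (simp add: mgraph_def)
  show ?thesis
  proof (rule gamma_coe_le_transfer[OF \<open>finite V\<close> finite_Diff[OF \<open>finite V\<close>]])
    fix D
    assume "coeven_dominating (V - {v}) (E - {e}) (contr_ends ends u v) D"
    then show "\<exists>D'. coeven_dominating V E ends D' \<and> card D' \<le> card D + 2"
      using coeven_dominating_uncontr[OF assms] card_Un_ends_le[OF assms(1,2), of D] assms(3)
      by auto
  qed
qed

theorem mainTheorem7:
  fixes V :: "'v set" and E :: "'e set" and ends :: "'e \<Rightarrow> 'v set"
    and e :: 'e and u v :: 'v
  assumes "mgraph V E ends"
    and "e \<in> E" and "ends e = {u, v}"
    and "\<forall>f\<in>E - {e}. ends f \<noteq> {u, v}"
  shows "(real (gamma_coe V (del_edge E e) ends)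
            + real (gamma_coe (contr_vertices V v) (del_edge E e) (contr_ends ends u v))) / 2 - 1
           \<le> real (gamma_coe V E ends) \<and>
         real (gamma_coe V E ends)
           \<le> (real (gamma_coe V (del_edge E e) ends)
            + real (gamma_coe (contr_vertices V v) (del_edge E e) (contr_ends ends u v))) / 2 + 2"
proof -
  have "gamma_coe V (del_edge E e) ends \<le> gamma_coe V E ends + 2"
    and "gamma_coe V E ends \<le> gamma_coe V (del_edge E e) ends + 2"
    using gamma_coe_del_edge_le[OF assms(1,2)] gamma_coe_le_del_edge[OF assms(1,2)]
    by (simp_all add: del_edge_def)
  moreover have "gamma_coe (contr_vertices V v) (del_edge E e) (contr_ends ends u v)
      \<le> gamma_coe V E ends"
    and "gamma_coe V E ends
      \<le> gamma_coe (contr_vertices V v) (del_edge E e) (contr_ends ends u v) + 2"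
    using gamma_coe_contr_le[OF assms] gamma_coe_le_contr[OF assms(1-3)]
    by (simp_all add: del_edge_def contr_vertices_def)
  ultimately show ?thesis
    by (simp add: field_simps)
qed

end
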